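(* For every positive integer $n$ and every partition $\alpha\in\mathcal{P}(n)$ there exist unique integers $q>0$ and $s_1,\dots,s_q\ge0$ such that \[\delta(\alpha)=\big(1,2,\dots,q-1,q,q^{(s_q)},(q-1)^{(s_{q-1})},\dots,1^{(s_1)}\big),\] and these satisfy $\frac{q(q+1)}{2}+\sum_{k=1}^q k\,s_k=n$.
   Context: A partition of a positive integer $n$ is a finite non-increasing sequence $\alpha=(\alpha_1,\dots,\alpha_l)$ of positive integers with sum $n$; $\mathcal{P}(n)$ is the set of partitions of $n$, and $\alpha_i=0$ for $i>l$. The diagonal sequence is $\delta(\alpha)=(d_k)_{k\ge1}$ with $d_k=|\{i:1\le i\le k,\ \alpha_i+i-1\ge k\}|$, trailing zeros omitted. The notation $j^{(s)}$ denotes $s$ consecutive entries equal to $j$. *)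

theory Defs
  imports Main
begin

definition is_partition :: "nat \<Rightarrow> nat list \<Rightarrow> bool" where
  "is_partition n \<alpha> \<longleftrightarrow> sorted_wrt (\<ge>) \<alpha> \<and> (\<forall>x\<in>set \<alpha>. 0 < x) \<and> sum_list \<alpha> = n"

text \<open>1-indexed parts, with alpha_i = 0 for i > length.\<close>
definition part :: "nat list \<Rightarrow> nat \<Rightarrow> nat" where
  "part \<alpha> i = (if 1 \<le> i \<and> i \<le> length \<alpha> then \<alpha> ! (i - 1) else 0)"

definition diag_entry :: "nat list \<Rightarrow> nat \<Rightarrow> nat" where
  "diag_entry \<alpha> k = card {i. 1 \<le> i \<and> i \<le> k \<and> part \<alpha> i + i - 1 \<ge> k}"

definition diag_len :: "nat list \<Rightarrow> nat" where
  "diag_len \<alpha> = (LEAST K. \<forall>k>K. diag_entry \<alpha> k = 0)"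

definition diag_seq :: "nat list \<Rightarrow> nat list" where
  "diag_seq \<alpha> = map (diag_entry \<alpha>) [1..<diag_len \<alpha> + 1]"

text \<open>The sequence (1,2,...,q, q^(s_q), ..., 1^(s_1)), with s_k = ss ! (k-1).\<close>
definition stair_seq :: "nat \<Rightarrow> nat list \<Rightarrow> nat list" where
  "stair_seq q ss = [1..<q + 1] @ concat (map (\<lambda>k. replicate (ss ! (k - 1)) k) (rev [1..<q + 1]))"

end

theory Submission
  imports Defs
begin

text \<open>
  The entry d_k counts the cells of the Young diagram of \<alpha> on its k-th antidiagonal, so
  d_1 + d_2 + ... = n. Passing from antidiagonal k to k + 1 adds at most one cell, and if
  antidiagonal k misses some row i, then so does antidiagonal k + 1, while the rows below
  row i move up by one (the parts are non-increasing); hence d_(k+1) \<le> d_k unless d_k = k.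
  So d rises as 1, 2, ..., q and then is non-increasing with values in 1..q, i.e. it is a
  staircase sequence, and the multiplicities s_k are determined as occurrence counts.
\<close>

fun desc_blocks :: "(nat \<Rightarrow> nat) \<Rightarrow> nat \<Rightarrow> nat list" where
  "desc_blocks f 0 = []"
| "desc_blocks f (Suc q) = replicate (f (Suc q)) (Suc q) @ desc_blocks f q"

lemma set_desc_blocks: "set (desc_blocks f q) \<subseteq> {1..q}"
  by (induction q) auto

lemma count_list_replicate: "count_list (replicate m x) k = (if x = k then m else 0)"
  by (induction m) auto

lemma count_list_upt: "count_list [a..<b] k = (if k \<in> {a..<b} then 1 else 0)"
  by (induction b) auto

lemma count_list_desc_blocks:
  "count_list (desc_blocks f q) k = (if k \<in> {1..q} then f k else 0)"
  by (induction q) (auto simp: count_list_replicate)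

lemma sum_list_desc_blocks: "sum_list (desc_blocks f q) = (\<Sum>k=1..q. k * f k)"
  by (induction q) (auto simp: sum_list_replicate)

lemma sorted_desc_blocks: "sorted_wrt (\<ge>) (desc_blocks f q)"
proof (induction q)
  case (Suc q)
  then show ?case using set_desc_blocks[of f q]
    by (auto simp: sorted_wrt_append sorted_wrt_iff_nth_less[where xs = "replicate _ _"])
qed simp

lemma stair_seq_eq_desc_blocks:
  "stair_seq q ss = [1..<q + 1] @ desc_blocks (\<lambda>k. ss ! (k - 1)) q"
proof -
  have "concat (map (\<lambda>k. replicate (ss ! (k - 1)) k) (rev [1..<q + 1]))
      = desc_blocks (\<lambda>k. ss ! (k - 1)) q"
    by (induction q) auto
  then show ?thesis by (simp add: stair_seq_def)
qed

lemma sorted_desc_eqI: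
  fixes xs ys :: "'a::linorder list"
  assumes "sorted_wrt (\<ge>) xs" "sorted_wrt (\<ge>) ys" "\<And>k. count_list xs k = count_list ys k"
  shows "xs = ys"
  using assms
proof (induction xs arbitrary: ys)
  case Nil
  then have "x \<notin> set ys" for x
    by (simp add: count_list_0_iff[symmetric])
  then show ?case by (cases ys) auto
next
  case (Cons x xs)
  then have "set ys = set (x # xs)" by (metis count_list_0_iff set_eqI)
  then obtain y ys' where ys: "ys = y # ys'" by (cases ys) auto
  have "y \<in> set (x # xs)" "x \<in> set ys"
    using \<open>set ys = set (x # xs)\<close> ys by auto
  then have "y \<le> x" "x \<le> y"
    using Cons.prems(1,2) ys by auto
  then have "x = y" by simp
  then have "count_list xs k = count_list ys' k" for k
    using Cons.prems(3)[of k] ys by (simp split: if_splits)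
  then show ?case using Cons ys \<open>x = y\<close> by simp
qed

lemma desc_blocks_eq_sorted:
  assumes "sorted_wrt (\<ge>) r" "set r \<subseteq> {1..q}" "\<And>k. k \<in> {1..q} \<Longrightarrow> f k = count_list r k"
  shows "desc_blocks f q = r"
  by (rule sorted_desc_eqI[OF sorted_desc_blocks assms(1)])
    (use assms(2,3) in \<open>auto simp: count_list_desc_blocks count_list_0_iff\<close>)

lemma count_list_stair_seq:
  "count_list (stair_seq q ss) k = (if k \<in> {1..q} then Suc (ss ! (k - 1)) else 0)"
  by (simp add: stair_seq_eq_desc_blocks count_list_desc_blocks count_list_upt)

lemma stair_seq_inject:
  assumes "stair_seq q ss = stair_seq q' ss'" "length ss = q" "length ss' = q'"
  shows "q = q' \<and> ss = ss'"
proof -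
  have count: "(if k \<in> {1..q} then Suc (ss ! (k - 1)) else 0)
      = (if k \<in> {1..q'} then Suc (ss' ! (k - 1)) else 0)" for k
    using assms(1) by (metis count_list_stair_seq)
  have "q = q'"
    using count[of "max q q'"] by (auto split: if_splits simp: max_def)
  moreover have "ss = ss'"
  proof (rule nth_equalityI)
    show "length ss = length ss'" using assms(2,3) \<open>q = q'\<close> by simp
    show "ss ! i = ss' ! i" if "i < length ss" for i
      using count[of "Suc i"] that assms(2) \<open>q = q'\<close> by simp
  qed
  ultimately show ?thesis ..
qed

lemma sum_list_stair_seq:
  "sum_list (stair_seq q ss) = q * (q + 1) div 2 + (\<Sum>k=1..q. k * ss ! (k - 1))"
proof -
  have "sum_list [1..<q + 1] = \<Sum>{0..q}"
    by (induction q) auto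
  then show ?thesis
    by (simp add: stair_seq_eq_desc_blocks sum_list_desc_blocks gauss_sum_nat)
qed

lemma map_eq_stair_seqI:
  fixes d :: "nat \<Rightarrow> nat"
  assumes one: "d 1 = 1" and pos: "0 < d K"
    and le_index: "\<And>k. d k \<le> k"
    and Suc_le: "\<And>k. d (Suc k) \<le> Suc (d k)"
    and Suc_le_if_less: "\<And>k. d k < k \<Longrightarrow> d (Suc k) \<le> d k"
  shows "\<exists>q ss. 0 < q \<and> length ss = q \<and> map d [1..<K + 1] = stair_seq q ss"
proof -
  have "1 \<le> K"
    using pos le_index[of 0] by (cases K) auto
  define S where "S = {k \<in> {1..K}. d k = k}"
  define q where "q = Max S"
  have S: "finite S" "1 \<in> S"
    using one \<open>1 \<le> K\<close> by (auto simp: S_def)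
  then have "q \<in> S"
    unfolding q_def by (intro Max_in) auto
  then have q: "q \<in> {1..K}" "d q = q"
    by (simp_all add: S_def)
  have below: "d k < k" if "q < k" "k \<le> K" for k
    using Max_ge[OF S(1), of k] le_index[of k] that q by (fastforce simp: q_def S_def)
  have ident: "d k = k" if "k \<le> q" for k
    using that
  proof (induction k rule: inc_induct)
    case (step k)
    then show ?case using Suc_le[of k] le_index[of k] by simp
  qed (rule q(2))
  have antitone: "d j \<le> d i" if "q < i" "i \<le> j" "j \<le> K" for i j
    using that(2,3)
  proof (induction j rule: dec_induct)
    case (step j)
    then show ?case using Suc_le_if_less[OF below, of j] that(1) by simp
  qed simp
  have tail_le_q: "d k \<le> q" if "q < k" "k \<le> K" for k
  proof -
    have "d (Suc q) \<le> q"
      using Suc_le[of q] below[of "Suc q"] q(2) that by simp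
    then show ?thesis using antitone[of "Suc q" k] that by simp
  qed
  define r where "r = map d [Suc q..<K + 1]"
  define ss where "ss = map (count_list r) [1..<q + 1]"
  have "sorted_wrt (\<ge>) r"
    unfolding r_def
  proof (rule sorted_wrt_map_mono[OF sorted_wrt_upt])
    fix i j assume "i \<in> set [Suc q..<K + 1]" "j \<in> set [Suc q..<K + 1]" "i < j"
    then show "d j \<le> d i" by (intro antitone) auto
  qed
  moreover have "set r \<subseteq> {1..q}"
  proof
    fix x assume "x \<in> set r"
    then obtain k where "k \<in> {Suc q..<K + 1}" "x = d k"
      unfolding r_def set_map set_upt by blast
    then show "x \<in> {1..q}" using tail_le_q[of k] antitone[of k K] pos by simp
  qed
  ultimately have "desc_blocks (\<lambda>k. ss ! (k - 1)) q = r"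
    by (rule desc_blocks_eq_sorted) (auto simp: ss_def nth_append simp del: upt_Suc)
  moreover have "[1..<K + 1] = [1..<q + 1] @ [Suc q..<K + 1]"
    using upt_add_eq_append[of 1 "q + 1" "K - q"] q(1) by (simp del: upt_Suc)
  moreover have "map d [1..<q + 1] = [1..<q + 1]"
    by (rule map_idI) (use ident in auto)
  ultimately have "map d [1..<K + 1] = stair_seq q ss"
    by (simp add: stair_seq_eq_desc_blocks r_def del: upt_Suc)
  moreover have "length ss = q" "0 < q"
    using q(1) by (simp_all add: ss_def)
  ultimately show ?thesis by blast
qed

text \<open>Row i meets the k-th antidiagonal in the cell (i, k - i + 1).\<close>
definition antidiag :: "nat list \<Rightarrow> nat \<Rightarrow> nat set" where
  "antidiag \<alpha> k = {i. 1 \<le> i \<and> i \<le> k \<and> part \<alpha> i + i - 1 \<ge> k}"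

lemma diag_entry_eq_card_antidiag: "diag_entry \<alpha> k = card (antidiag \<alpha> k)"
  by (simp add: diag_entry_def antidiag_def)

lemma antidiag_subset: "antidiag \<alpha> k \<subseteq> {1..k}"
  by (auto simp: antidiag_def)

lemma finite_antidiag [simp]: "finite (antidiag \<alpha> k)"
  using antidiag_subset finite_subset by blast

lemma diag_entry_le: "diag_entry \<alpha> k \<le> k"
  using card_mono[OF _ antidiag_subset] by (simp add: diag_entry_eq_card_antidiag)

lemma diag_entry_Suc_le: "diag_entry \<alpha> (Suc k) \<le> Suc (diag_entry \<alpha> k)"
proof -
  have "antidiag \<alpha> (Suc k) \<subseteq> insert (Suc k) (antidiag \<alpha> k)"
    by (auto simp: antidiag_def)
  then have "card (antidiag \<alpha> (Suc k)) \<le> card (insert (Suc k) (antidiag \<alpha> k))"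
    by (intro card_mono) auto
  then show ?thesis
    by (simp add: diag_entry_eq_card_antidiag card_insert_if split: if_splits)
qed

lemma part_antimono:
  assumes "sorted_wrt (\<ge>) \<alpha>" "1 \<le> i" "i \<le> j"
  shows "part \<alpha> j \<le> part \<alpha> i"
proof (cases "i < j \<and> j \<le> length \<alpha>")
  case True
  then have "\<alpha> ! (j - 1) \<le> \<alpha> ! (i - 1)"
    using assms by (intro sorted_wrt_nth_less[where P = "(\<ge>)"]) auto
  then show ?thesis using True assms(2) by (simp add: part_def)
qed (use assms in \<open>auto simp: part_def\<close>)

lemma diag_entry_Suc_le_if_less:
  assumes "sorted_wrt (\<ge>) \<alpha>" "diag_entry \<alpha> k < k"
  shows "diag_entry \<alpha> (Suc k) \<le> diag_entry \<alpha> k"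
proof -
  have "antidiag \<alpha> k \<noteq> {1..k}"
    using assms(2) by (auto simp: diag_entry_eq_card_antidiag)
  then obtain i\<^sub>0 where i\<^sub>0: "i\<^sub>0 \<in> {1..k}" "i\<^sub>0 \<notin> antidiag \<alpha> k"
    using antidiag_subset by blast
  then have notin_Suc: "i\<^sub>0 \<notin> antidiag \<alpha> (Suc k)"
    by (auto simp: antidiag_def)
  \<comment> \<open>Rows above the missing row keep their index, rows below it move up by one.\<close>
  define f where "f i = (if i < i\<^sub>0 then i else i - 1)" for i
  have "f ` antidiag \<alpha> (Suc k) \<subseteq> antidiag \<alpha> k"
  proof
    fix x assume "x \<in> f ` antidiag \<alpha> (Suc k)"
    then obtain i where i: "i \<in> antidiag \<alpha> (Suc k)" "x = f i" by blast
    show "x \<in> antidiag \<alpha> k"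
    proof (cases "i < i\<^sub>0")
      case True
      then show ?thesis using i i\<^sub>0(1) by (auto simp: antidiag_def f_def)
    next
      case False
      moreover have "i \<noteq> i\<^sub>0" using i(1) notin_Suc by blast
      ultimately have "i\<^sub>0 < i" by simp
      moreover have "part \<alpha> i \<le> part \<alpha> (i - 1)"
        using i\<^sub>0(1) calculation by (intro part_antimono[OF assms(1)]) auto
      ultimately show ?thesis using i i\<^sub>0(1) by (auto simp: antidiag_def f_def)
    qed
  qed
  moreover have "inj_on f ({1..} - {i\<^sub>0})"
    by (auto simp: inj_on_def f_def split: if_splits)
  then have "inj_on f (antidiag \<alpha> (Suc k))"
    by (rule inj_on_subset) (use notin_Suc in \<open>auto simp: antidiag_def\<close>)
  ultimately show ?thesis
    unfolding diag_entry_eq_card_antidiag by (intro card_inj_on_le) auto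
qed

lemma diag_entry_1: "0 < part \<alpha> 1 \<Longrightarrow> diag_entry \<alpha> 1 = 1"
proof -
  assume "0 < part \<alpha> 1"
  then have "antidiag \<alpha> 1 = {1}" by (auto simp: antidiag_def)
  then show ?thesis by (simp add: diag_entry_eq_card_antidiag)
qed

lemma part_add_index_le: "0 < part \<alpha> i \<Longrightarrow> part \<alpha> i + i \<le> sum_list \<alpha> + length \<alpha>"
proof -
  assume "0 < part \<alpha> i"
  then have i: "1 \<le> i" "i \<le> length \<alpha>" and "part \<alpha> i = \<alpha> ! (i - 1)"
    by (auto simp: part_def split: if_splits)
  moreover have "\<alpha> ! (i - 1) \<le> sum_list \<alpha>"
    using i by (intro member_le_sum_list) auto
  ultimately show ?thesis by simp
qed

lemma diag_entry_eq_0: "sum_list \<alpha> + length \<alpha> \<le> k \<Longrightarrow> diag_entry \<alpha> k = 0"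
proof -
  assume k: "sum_list \<alpha> + length \<alpha> \<le> k"
  have "antidiag \<alpha> k = {}"
  proof (rule ccontr)
    assume "antidiag \<alpha> k \<noteq> {}"
    then obtain i where i: "1 \<le> i" "i \<le> k" "k \<le> part \<alpha> i + i - 1"
      by (auto simp: antidiag_def)
    then have "0 < part \<alpha> i" by simp
    then show False using part_add_index_le[of \<alpha> i] i k by simp
  qed
  then show ?thesis by (simp add: diag_entry_eq_card_antidiag)
qed

lemma sum_part: "length \<alpha> \<le> N \<Longrightarrow> (\<Sum>i=1..N. part \<alpha> i) = sum_list \<alpha>"
proof -
  assume N: "length \<alpha> \<le> N"
  have "(\<Sum>i=1..N. part \<alpha> i) = (\<Sum>i<N. part \<alpha> (Suc i))"
    by (simp add: sum.atLeast1_atMost_eq)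
  also have "\<dots> = (\<Sum>i<length \<alpha>. \<alpha> ! i)"
    using N by (intro sum.mono_neutral_cong_right) (auto simp: part_def)
  also have "\<dots> = sum_list \<alpha>"
    by (simp add: sum_list_sum_nth atLeast0LessThan)
  finally show ?thesis .
qed

lemma sum_diag_entry:
  assumes N: "sum_list \<alpha> + length \<alpha> \<le> N"
  shows "(\<Sum>k=1..N. diag_entry \<alpha> k) = sum_list \<alpha>"
proof -
  define cells where "cells = (SIGMA i:{1..N}. {i..part \<alpha> i + i - 1})"
  have "prod.swap ` (SIGMA k:{1..N}. antidiag \<alpha> k) = cells"
  proof
    show "prod.swap ` (SIGMA k:{1..N}. antidiag \<alpha> k) \<subseteq> cells"
      by (auto simp: cells_def antidiag_def)
    show "cells \<subseteq> prod.swap ` (SIGMA k:{1..N}. antidiag \<alpha> k)"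
    proof
      fix c assume "c \<in> cells"
      then obtain i k where c: "c = (i, k)" "1 \<le> i" "i \<le> k" "k \<le> part \<alpha> i + i - 1"
        by (auto simp: cells_def)
      then have "0 < part \<alpha> i" by simp
      then have "k \<le> N" using part_add_index_le[of \<alpha> i] N c by simp
      then show "c \<in> prod.swap ` (SIGMA k:{1..N}. antidiag \<alpha> k)"
        using c by (auto simp: antidiag_def image_iff)
    qed
  qed
  then have "card (SIGMA k:{1..N}. antidiag \<alpha> k) = card cells"
    by (metis card_image inj_swap)
  then show ?thesis
    using sum_part[of \<alpha> N] N by (simp add: cells_def diag_entry_eq_card_antidiag)
qed

lemma diag_entry_gt_diag_len: "diag_len \<alpha> < k \<Longrightarrow> diag_entry \<alpha> k = 0"
proof -
  have "\<forall>k > sum_list \<alpha> + length \<alpha>. diag_entry \<alpha> k = 0"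
    by (simp add: diag_entry_eq_0)
  then have "\<forall>k > diag_len \<alpha>. diag_entry \<alpha> k = 0"
    unfolding diag_len_def by (rule LeastI)
  then show "diag_len \<alpha> < k \<Longrightarrow> diag_entry \<alpha> k = 0" by blast
qed

lemma diag_len_le: "diag_len \<alpha> \<le> sum_list \<alpha> + length \<alpha>"
  unfolding diag_len_def by (rule Least_le) (simp add: diag_entry_eq_0)

lemma diag_entry_diag_len_pos:
  assumes "0 < diag_len \<alpha>"
  shows "0 < diag_entry \<alpha> (diag_len \<alpha>)"
proof (rule ccontr)
  assume last_zero: "\<not> 0 < diag_entry \<alpha> (diag_len \<alpha>)"
  have "diag_entry \<alpha> k = 0" if "diag_len \<alpha> - 1 < k" for k
    using that last_zero diag_entry_gt_diag_len[of \<alpha> k] by (cases "k = diag_len \<alpha>") auto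
  then have "diag_len \<alpha> \<le> diag_len \<alpha> - 1"
    unfolding diag_len_def by (intro Least_le) blast
  then show False using assms by simp
qed

lemma diag_len_pos: "0 < part \<alpha> 1 \<Longrightarrow> 0 < diag_len \<alpha>"
  using diag_entry_1[of \<alpha>] diag_entry_gt_diag_len[of \<alpha> 1] by fastforce

lemma sum_list_diag_seq: "sum_list (diag_seq \<alpha>) = sum_list \<alpha>"
proof -
  have "sum_list (diag_seq \<alpha>) = (\<Sum>k=1..diag_len \<alpha>. diag_entry \<alpha> k)"
    by (simp add: diag_seq_def sum_set_upt_conv_sum_list_nat[symmetric]
        atLeastLessThanSuc_atLeastAtMost del: upt_Suc)
  also have "\<dots> = (\<Sum>k=1..sum_list \<alpha> + length \<alpha>. diag_entry \<alpha> k)"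
    using diag_len_le diag_entry_gt_diag_len by (intro sum.mono_neutral_left) auto
  also have "\<dots> = sum_list \<alpha>"
    by (rule sum_diag_entry) simp
  finally show ?thesis .
qed

theorem corollary2p2:
  fixes n :: nat and \<alpha> :: "nat list"
  assumes "0 < n" and "is_partition n \<alpha>"
  shows "(\<exists>!(q, ss). 0 < q \<and> length ss = q \<and> diag_seq \<alpha> = stair_seq q ss)
       \<and> (\<forall>q ss. 0 < q \<and> length ss = q \<and> diag_seq \<alpha> = stair_seq q ss \<longrightarrow>
            q * (q + 1) div 2 + (\<Sum>k=1..q. k * ss ! (k - 1)) = n)"
proof -
  have sorted: "sorted_wrt (\<ge>) \<alpha>" and sum: "sum_list \<alpha> = n"
    using assms(2) by (simp_all add: is_partition_def)
  have "0 < part \<alpha> 1"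
    using assms by (cases \<alpha>) (auto simp: is_partition_def part_def)
  then have "\<exists>q ss. 0 < q \<and> length ss = q
      \<and> map (diag_entry \<alpha>) [1..<diag_len \<alpha> + 1] = stair_seq q ss"
    by (intro map_eq_stair_seqI diag_entry_1 diag_entry_diag_len_pos diag_len_pos
        diag_entry_le diag_entry_Suc_le diag_entry_Suc_le_if_less[OF sorted])
  then obtain q ss where stair: "0 < q" "length ss = q" "diag_seq \<alpha> = stair_seq q ss"
    unfolding diag_seq_def by blast
  have "\<exists>!(q, ss). 0 < q \<and> length ss = q \<and> diag_seq \<alpha> = stair_seq q ss"
  proof (rule ex1I[of _ "(q, ss)"])
    show "\<And>p. (case p of (q', ss') \<Rightarrow> 0 < q' \<and> length ss' = q' \<and> diag_seq \<alpha> = stair_seq q' ss')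
        \<Longrightarrow> p = (q, ss)"
      using stair stair_seq_inject by auto
  qed (use stair in simp)
  moreover have "q * (q + 1) div 2 + (\<Sum>k=1..q. k * ss ! (k - 1)) = n"
    if "diag_seq \<alpha> = stair_seq q ss" for q ss
  proof -
    have "sum_list (stair_seq q ss) = n"
      using that sum_list_diag_seq[of \<alpha>] sum by simp
    then show ?thesis by (simp only: sum_list_stair_seq)
  qed
  ultimately show ?thesis by simp
qed

end
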